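(* Let $|\zeta\rangle$ be an $n$-qubit pure state and $\rho$ an $n$-qubit state. Let $x,z$ be the measurement outcomes of the state-based classical shadow procedure run on input $\rho$ with auxiliary state $|\zeta\rangle$. Then for all $x,z\in\{0,1\}^n$, $$\Pr[x,z\mid\zeta]=\frac{1}{2^n}\langle\zeta^*_{x,z}|\rho|\zeta^*_{x,z}\rangle.$$
   Context: State-based classical shadow procedure: registers $R_1,R_2$ of $n$ qubits; $R_1$ holds $\rho$, $R_2$ holds $|\zeta\rangle$; apply $n$ CNOT gates qubit by qubit with $R_1$ qubits as controls and $R_2$ qubits as targets, then $H^{\otimes n}$ on $R_1$, then measure $R_1$ and $R_2$ in the computational basis obtaining $z$ and $x$ respectively. $|\zeta_{x,z}\rangle=X^xZ^z|\zeta\rangle$ with $X^x=\bigotimes_jX^{x_j}$, $Z^z=\bigotimes_jZ^{z_j}$, and $|\zeta^*_{x,z}\rangle$ is its entrywise complex conjugate in the computational basis. *)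

theory Defs
  imports Complex_Main
begin

text \<open>Computational basis states of an n-qubit register are indexed by bit strings,
  represented as boolean lists of length n (entry j = value of qubit j).
  Vectors are functions from bit strings to complex amplitudes, operators on one
  register are kernels (matrix entries), operators on the joint register
  R1 R2 are kernels indexed by pairs (bits of R1, bits of R2).\<close>

definition bitstrings :: "nat \<Rightarrow> bool list set" where
  "bitstrings n = {xs. length xs = n}"

type_synonym vec = "bool list \<Rightarrow> complex"
type_synonym op1 = "bool list \<Rightarrow> bool list \<Rightarrow> complex"
type_synonym op2 = "bool list \<times> bool list \<Rightarrow> bool list \<times> bool list \<Rightarrow> complex"

definition is_pure_state :: "nat \<Rightarrow> vec \<Rightarrow> bool" where
  "is_pure_state n \<psi> \<longleftrightarrow> (\<Sum>b\<in>bitstrings n. (cmod (\<psi> b))\<^sup>2) = 1"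

definition expval :: "nat \<Rightarrow> op1 \<Rightarrow> vec \<Rightarrow> complex" where
  "expval n A v = (\<Sum>a\<in>bitstrings n. \<Sum>b\<in>bitstrings n. cnj (v a) * A a b * v b)"

definition is_density :: "nat \<Rightarrow> op1 \<Rightarrow> bool" where
  "is_density n \<rho> \<longleftrightarrow>
     (\<forall>a\<in>bitstrings n. \<forall>b\<in>bitstrings n. \<rho> b a = cnj (\<rho> a b)) \<and>
     (\<forall>v. 0 \<le> Re (expval n \<rho> v)) \<and>
     (\<Sum>a\<in>bitstrings n. \<rho> a a) = 1"

definition id2 :: op2 where
  "id2 = (\<lambda>p q. if p = q then 1 else 0)"

definition mult2 :: "nat \<Rightarrow> op2 \<Rightarrow> op2 \<Rightarrow> op2" where
  "mult2 n A B = (\<lambda>p q. \<Sum>r\<in>bitstrings n \<times> bitstrings n. A p r * B r q)"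

definition adj2 :: "op2 \<Rightarrow> op2" where
  "adj2 A = (\<lambda>p q. cnj (A q p))"

definition cnot_gate :: "nat \<Rightarrow> op2" where
  "cnot_gate j = (\<lambda>(c, d) (a, b).
     if c = a \<and> d = b[j := (b ! j \<noteq> a ! j)] then 1 else 0)"

definition cnot_layer :: "nat \<Rightarrow> op2" where
  "cnot_layer n = fold (\<lambda>j U. mult2 n (cnot_gate j) U) [0..<n] id2"

definition hadamard1 :: "bool \<Rightarrow> bool \<Rightarrow> complex" where
  "hadamard1 c a = (if c \<and> a then -1 else 1) / complex_of_real (sqrt 2)"

definition hadamard_n :: "nat \<Rightarrow> op1" where
  "hadamard_n n = (\<lambda>c a. \<Prod>j<n. hadamard1 (c ! j) (a ! j))"

definition on_R1 :: "op1 \<Rightarrow> op2" where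
  "on_R1 A = (\<lambda>(c, d) (a, b). A c a * (if d = b then 1 else 0))"

definition shadow_circuit :: "nat \<Rightarrow> op2" where
  "shadow_circuit n = mult2 n (on_R1 (hadamard_n n)) (cnot_layer n)"

definition input_state :: "op1 \<Rightarrow> vec \<Rightarrow> op2" where
  "input_state \<rho> \<zeta> = (\<lambda>(a, b) (a', b'). \<rho> a a' * \<zeta> b * cnj (\<zeta> b'))"

text \<open>Born-rule probability of outcome z on R1 and x on R2.\<close>
definition shadow_prob :: "nat \<Rightarrow> op1 \<Rightarrow> vec \<Rightarrow> bool list \<Rightarrow> bool list \<Rightarrow> real" where
  "shadow_prob n \<rho> \<zeta> x z =
     Re (mult2 n (mult2 n (shadow_circuit n) (input_state \<rho> \<zeta>)) (adj2 (shadow_circuit n))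
           (z, x) (z, x))"

definition pauliX :: "bool list \<Rightarrow> vec \<Rightarrow> vec" where
  "pauliX x \<psi> = (\<lambda>b. \<psi> (map2 (\<noteq>) b x))"

definition pauliZ :: "bool list \<Rightarrow> vec \<Rightarrow> vec" where
  "pauliZ z \<psi> = (\<lambda>b. (-1) ^ card {j. j < length b \<and> z ! j \<and> b ! j} * \<psi> b)"

definition zeta_xz :: "vec \<Rightarrow> bool list \<Rightarrow> bool list \<Rightarrow> vec" where
  "zeta_xz \<zeta> x z = pauliX x (pauliZ z \<zeta>)"

definition conj_vec :: "vec \<Rightarrow> vec" where
  "conj_vec \<psi> = (\<lambda>b. cnj (\<psi> b))"

end

theory Submission
  imports Defs
begin

(* The CNOT layer sends |a, b> to |a, b xor a> and H^n has entries (-1)^(c.a) / sqrt 2^n, so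
   the outcome (z, x) projects the input onto the row vector w a = H z a * zeta (x xor a), and
   its probability is the quadratic form of rho at conj w.  Since
   (-1)^(z.a) = (-1)^(z.x) (-1)^(z.(a xor x)), w is the global phase (-1)^(z.x) times
   2^(-n/2) zeta_{x,z}, and the phase drops out of the quadratic form. *)

definition xor_bits :: "bool list \<Rightarrow> bool list \<Rightarrow> bool list" where
  "xor_bits a b = map2 (\<noteq>) a b"

lemma length_xor_bits [simp]: "length (xor_bits a b) = min (length a) (length b)"
  by (simp add: xor_bits_def)

lemma nth_xor_bits [simp]:
  "j < length a \<Longrightarrow> j < length b \<Longrightarrow> xor_bits a b ! j = (a ! j \<noteq> b ! j)"
  by (simp add: xor_bits_def)

lemma xor_bits_commute: "length a = length b \<Longrightarrow> xor_bits a b = xor_bits b a"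
  by (rule nth_equalityI) auto

lemma xor_bits_cancel: "length a = length b \<Longrightarrow> xor_bits (xor_bits a b) b = a"
  by (rule nth_equalityI) auto

lemma xor_bits_in_bitstrings:
  "a \<in> bitstrings n \<Longrightarrow> b \<in> bitstrings n \<Longrightarrow> xor_bits a b \<in> bitstrings n"
  by (simp add: bitstrings_def)

lemma pauliX_xor_bits: "pauliX x \<psi> = (\<lambda>b. \<psi> (xor_bits b x))"
  by (simp add: pauliX_def xor_bits_def)

lemma finite_bitstrings [simp]: "finite (bitstrings n)"
  using finite_lists_length_eq[of "UNIV :: bool set" n] by (simp add: bitstrings_def)

lemma mult2_indicator_right:
  assumes "\<And>r. B r q = (if r = p then 1 else 0)" and "p \<in> bitstrings n \<times> bitstrings n"
  shows "mult2 n A B s q = A s p"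
  using assms(2) unfolding mult2_def assms(1)
  by (simp add: if_distrib sum.delta cong: if_cong del: mem_Sigma_iff)

lemma sum_Times_graph:
  assumes "finite B" "g ` A \<subseteq> B"
  shows "(\<Sum>(a, b)\<in>A \<times> B. if b = g a then f a b else 0) = (\<Sum>a\<in>A. f a (g a))"
  using assms by (simp add: sum.cartesian_product[symmetric] sum.delta' image_subset_iff)

(* Register R2 after the CNOTs on qubits 0, ..., k - 1, starting from R1 = a and R2 = b. *)
definition cnot_prefix :: "nat \<Rightarrow> bool list \<Rightarrow> bool list \<Rightarrow> bool list" where
  "cnot_prefix k a b = map (\<lambda>i. if i < k then b ! i \<noteq> a ! i else b ! i) [0..<length b]"

lemma cnot_prefix_0: "cnot_prefix 0 a b = b"
  by (rule nth_equalityI) (auto simp: cnot_prefix_def)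

lemma cnot_prefix_Suc:
  "k < length b \<Longrightarrow>
     (cnot_prefix k a b)[k := (cnot_prefix k a b ! k \<noteq> a ! k)] = cnot_prefix (Suc k) a b"
  by (rule nth_equalityI) (auto simp: cnot_prefix_def nth_list_update)

lemma cnot_prefix_length: "length a = length b \<Longrightarrow> cnot_prefix (length b) a b = xor_bits b a"
  by (rule nth_equalityI) (auto simp: cnot_prefix_def)

lemma fold_cnot_gate_basis:
  assumes "k \<le> n" "a \<in> bitstrings n" "b \<in> bitstrings n"
  shows "fold (\<lambda>j U. mult2 n (cnot_gate j) U) [0..<k] id2 r (a, b)
           = (if r = (a, cnot_prefix k a b) then 1 else 0)"
  using assms(1)
proof (induction k arbitrary: r)
  case 0
  then show ?case by (simp add: id2_def cnot_prefix_0)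
next
  case (Suc k)
  have "length b = n" using assms(3) by (simp add: bitstrings_def)
  then have "(cnot_prefix k a b)[k := (cnot_prefix k a b ! k \<noteq> a ! k)] = cnot_prefix (Suc k) a b"
    using Suc.prems cnot_prefix_Suc[of k b a] by simp
  moreover have "(a, cnot_prefix k a b) \<in> bitstrings n \<times> bitstrings n"
    using assms by (simp add: bitstrings_def cnot_prefix_def)
  ultimately show ?case
    using Suc by (simp add: mult2_indicator_right cnot_gate_def split: prod.split)
qed

lemma cnot_layer_basis:
  assumes "a \<in> bitstrings n" "b \<in> bitstrings n"
  shows "cnot_layer n r (a, b) = (if r = (a, xor_bits b a) then 1 else 0)"
  using fold_cnot_gate_basis[OF order_refl assms] assms cnot_prefix_length[of a b]
  by (simp add: cnot_layer_def bitstrings_def)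

lemma shadow_circuit_basis:
  assumes "a \<in> bitstrings n" "b \<in> bitstrings n"
  shows "shadow_circuit n (c, d) (a, b) = (if d = xor_bits b a then hadamard_n n c a else 0)"
proof -
  have "(a, xor_bits b a) \<in> bitstrings n \<times> bitstrings n"
    using assms by (simp add: xor_bits_in_bitstrings)
  then show ?thesis
    using assms by (simp add: shadow_circuit_def mult2_indicator_right cnot_layer_basis on_R1_def)
qed

definition dot_sign :: "bool list \<Rightarrow> bool list \<Rightarrow> complex" where
  "dot_sign z b = (-1) ^ card {j. j < length b \<and> z ! j \<and> b ! j}"

lemma pauliZ_dot_sign: "pauliZ z \<psi> = (\<lambda>b. dot_sign z b * \<psi> b)"
  by (simp add: pauliZ_def dot_sign_def)

lemma dot_sign_prod:
  assumes "length b = n"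
  shows "dot_sign z b = (\<Prod>j<n. if z ! j \<and> b ! j then -1 else 1)"
proof -
  have "{j. j < length b \<and> z ! j \<and> b ! j} = {..<n} \<inter> {j. z ! j \<and> b ! j}"
    using assms by auto
  then show ?thesis by (simp add: dot_sign_def prod.If_cases)
qed

lemma dot_sign_xor_bits:
  assumes "length a = n" "length b = n"
  shows "dot_sign z (xor_bits a b) = dot_sign z a * dot_sign z b"
proof -
  have "dot_sign z (xor_bits a b) = (\<Prod>j<n. if z ! j \<and> (a ! j \<noteq> b ! j) then -1 else 1)"
    using assms by (simp add: dot_sign_prod[of _ n])
  also have "\<dots> = (\<Prod>j<n. (if z ! j \<and> a ! j then -1 else 1) * (if z ! j \<and> b ! j then -1 else 1))"
    by (intro prod.cong) auto
  finally show ?thesis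
    using assms by (simp add: dot_sign_prod[of _ n] prod.distrib)
qed

lemma dot_sign_square: "dot_sign z b * dot_sign z b = 1"
  by (simp add: dot_sign_def flip: power_add mult_2)

lemma norm_dot_sign [simp]: "cmod (dot_sign z b) = 1"
  by (simp add: dot_sign_def norm_power)

lemma hadamard_n_dot_sign:
  assumes "length a = n"
  shows "hadamard_n n c a = dot_sign c a / complex_of_real (sqrt 2) ^ n"
proof -
  have "hadamard_n n c a = (\<Prod>j<n. (if c ! j \<and> a ! j then -1 else 1) / complex_of_real (sqrt 2))"
    by (simp add: hadamard_n_def hadamard1_def)
  then show ?thesis
    using assms by (simp add: prod_dividef dot_sign_prod)
qed

lemma expval_cong:
  "(\<And>b. b \<in> bitstrings n \<Longrightarrow> v b = w b) \<Longrightarrow> expval n A v = expval n A w"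
  by (simp add: expval_def)

lemma expval_scale: "expval n A (\<lambda>b. c * v b) = complex_of_real ((cmod c)\<^sup>2) * expval n A v"
proof -
  have "complex_of_real ((cmod c)\<^sup>2) = cnj c * c"
    using complex_norm_square[of c] by (simp add: mult.commute)
  then show ?thesis
    by (simp add: expval_def sum_distrib_left mult_ac)
qed

lemma expval_real_if_hermitian:
  assumes "\<forall>a\<in>bitstrings n. \<forall>b\<in>bitstrings n. A b a = cnj (A a b)"
  shows "complex_of_real (Re (expval n A v)) = expval n A v"
proof -
  have "cnj (expval n A v) = (\<Sum>a\<in>bitstrings n. \<Sum>b\<in>bitstrings n. v a * A b a * cnj (v b))"
    unfolding expval_def cnj_sum complex_cnj_mult complex_cnj_cnj
  proof (intro sum.cong refl)
    fix a b assume "a \<in> bitstrings n" "b \<in> bitstrings n"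
    then have "A b a = cnj (A a b)" using assms by blast
    then show "v a * cnj (A a b) * cnj (v b) = v a * A b a * cnj (v b)" by simp
  qed
  also have "\<dots> = expval n A v"
    unfolding expval_def by (subst sum.swap) (simp add: mult_ac)
  finally have "Im (expval n A v) = 0"
    by (metis cnj.sel(2) neg_equal_zero)
  then show ?thesis
    by (simp add: complex_eq_iff)
qed

lemma mult2_adj2_diag:
  "mult2 n (mult2 n U \<sigma>) (adj2 U) p p
     = (\<Sum>r\<in>bitstrings n \<times> bitstrings n. \<Sum>s\<in>bitstrings n \<times> bitstrings n. U p r * \<sigma> r s * cnj (U p s))"
  unfolding mult2_def adj2_def sum_distrib_right by (subst sum.swap) (simp add: mult_ac)

lemma shadow_circuit_row:
  assumes "x \<in> bitstrings n" "a \<in> bitstrings n" "b \<in> bitstrings n"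
  shows "shadow_circuit n (z, x) (a, b) = (if b = xor_bits x a then hadamard_n n z a else 0)"
  using assms xor_bits_cancel[of b a] xor_bits_cancel[of x a]
  by (auto simp: shadow_circuit_basis bitstrings_def xor_bits_commute)

lemma shadow_outcome_expval:
  assumes "x \<in> bitstrings n"
  shows "mult2 n (mult2 n (shadow_circuit n) (input_state \<rho> \<zeta>)) (adj2 (shadow_circuit n)) (z, x) (z, x)
           = expval n \<rho> (conj_vec (\<lambda>a. hadamard_n n z a * \<zeta> (xor_bits x a)))"
proof -
  let ?B = "bitstrings n"
  let ?H = "hadamard_n n z" and ?g = "xor_bits x"
  have g: "\<And>a. a \<in> ?B \<Longrightarrow> ?g a \<in> ?B"
    using assms by (simp add: xor_bits_in_bitstrings)
  have "mult2 n (mult2 n (shadow_circuit n) (input_state \<rho> \<zeta>)) (adj2 (shadow_circuit n)) (z, x) (z, x)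
      = (\<Sum>(a, b)\<in>?B \<times> ?B. if b = ?g a then
           \<Sum>(a', b')\<in>?B \<times> ?B. if b' = ?g a' then ?H a * \<zeta> b * \<rho> a a' * cnj (?H a' * \<zeta> b') else 0
         else 0)"
    unfolding mult2_adj2_diag using assms
    by (intro sum.cong refl) (auto simp: shadow_circuit_row input_state_def intro!: sum.cong)
  also have "\<dots> = (\<Sum>a\<in>?B. \<Sum>a'\<in>?B. ?H a * \<zeta> (?g a) * \<rho> a a' * cnj (?H a' * \<zeta> (?g a')))"
    using g by (simp add: sum_Times_graph image_subset_iff)
  also have "\<dots> = expval n \<rho> (conj_vec (\<lambda>a. ?H a * \<zeta> (?g a)))"
    by (simp add: expval_def conj_vec_def mult_ac)
  finally show ?thesis .
qed

lemma hadamard_n_times_shifted: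
  assumes "x \<in> bitstrings n" "a \<in> bitstrings n"
  shows "hadamard_n n z a * \<zeta> (xor_bits x a)
           = dot_sign z x / complex_of_real (sqrt 2) ^ n * zeta_xz \<zeta> x z a"
proof -
  have len: "length a = n" "length x = n"
    using assms by (simp_all add: bitstrings_def)
  then have "zeta_xz \<zeta> x z a = dot_sign z a * dot_sign z x * \<zeta> (xor_bits x a)"
    by (simp add: zeta_xz_def pauliX_xor_bits pauliZ_dot_sign dot_sign_xor_bits xor_bits_commute)
  then show ?thesis
    using len dot_sign_square[of z x] by (simp add: hadamard_n_dot_sign field_simps)
qed

lemma expval_hadamard_row:
  assumes "x \<in> bitstrings n"
  shows "expval n A (conj_vec (\<lambda>a. hadamard_n n z a * \<zeta> (xor_bits x a)))
           = (1 / 2 ^ n) * expval n A (conj_vec (zeta_xz \<zeta> x z))"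
proof -
  define c where "c = dot_sign z x / complex_of_real (sqrt 2) ^ n"
  have "expval n A (conj_vec (\<lambda>a. hadamard_n n z a * \<zeta> (xor_bits x a)))
      = expval n A (\<lambda>a. cnj c * conj_vec (zeta_xz \<zeta> x z) a)"
  proof (intro expval_cong)
    fix a assume "a \<in> bitstrings n"
    then have "hadamard_n n z a * \<zeta> (xor_bits x a) = c * zeta_xz \<zeta> x z a"
      using assms by (simp add: c_def hadamard_n_times_shifted)
    then show "conj_vec (\<lambda>a. hadamard_n n z a * \<zeta> (xor_bits x a)) a
        = cnj c * conj_vec (zeta_xz \<zeta> x z) a"
      by (simp add: conj_vec_def flip: complex_cnj_mult)
  qed
  also have "\<dots> = complex_of_real ((cmod c)\<^sup>2) * expval n A (conj_vec (zeta_xz \<zeta> x z))"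
    by (simp add: expval_scale)
  also have "complex_of_real ((cmod c)\<^sup>2) = 1 / 2 ^ n"
  proof -
    have "(sqrt 2 ^ n)\<^sup>2 = (2::real) ^ n"
      by (metis power_even_eq power_mult real_sqrt_pow2 zero_le_numeral)
    then show ?thesis
      by (simp add: c_def norm_divide norm_power power_divide)
  qed
  finally show ?thesis .
qed

theorem proposition4:
  fixes n :: nat and \<rho> :: op1 and \<zeta> :: vec and x z :: "bool list"
  assumes "is_density n \<rho>"
    and "is_pure_state n \<zeta>"
    and "x \<in> bitstrings n" and "z \<in> bitstrings n"
  shows "complex_of_real (shadow_prob n \<rho> \<zeta> x z)
           = (1 / 2 ^ n) * expval n \<rho> (conj_vec (zeta_xz \<zeta> x z))"
proof -
  have hermitian: "\<forall>a\<in>bitstrings n. \<forall>b\<in>bitstrings n. \<rho> b a = cnj (\<rho> a b)"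
    using assms(1) unfolding is_density_def by blast
  have "complex_of_real (shadow_prob n \<rho> \<zeta> x z)
      = expval n \<rho> (conj_vec (\<lambda>a. hadamard_n n z a * \<zeta> (xor_bits x a)))"
    using shadow_outcome_expval[OF assms(3)] expval_real_if_hermitian[OF hermitian]
    by (simp add: shadow_prob_def)
  also have "\<dots> = (1 / 2 ^ n) * expval n \<rho> (conj_vec (zeta_xz \<zeta> x z))"
    using assms(3) by (rule expval_hadamard_row)
  finally show ?thesis .
qed

end
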